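(* Let $(\Omega,\mathcal H,\mathbb E)$ be a sublinear expectation space with $\mathbb E[\cdot]=\sup_{\theta\in\Theta}E_{P_\theta}[\cdot]$, where $\{P_\theta\}_{\theta\in\Theta}$ is a countably-dimensional weakly compact family of probability measures on $(\Omega,\sigma(\mathcal H))$, and consider a discrete memoryless uncertain-distribution channel $[\mathcal X,\{\boldsymbol P_\lambda\}_{\lambda\in\Lambda},\mathcal Y]$ with finite alphabets. Then for any $R_c<\overline C$ and any $\epsilon>0$ there exist a sufficiently large $n$ and a $(M,n,\varphi_n,\psi_n)$ nonlinear channel code with coding rate $R_c$ such that $$\mathcal E\big[I_{\{\hat S\ne S\}}\big]=\inf_{\theta\in\Theta}P^{(n)}_{e,\theta}<\epsilon.$$
   Context: Sublinear expectation space: $\mathcal H$ a linear space of real functions on $\Omega$ (containing constants, closed under $|\cdot|$ and under bounded Borel functions of finitely many elements), $\mathbb E$ monotone, constant preserving, subadditive and positively homogeneous; conjugate $\mathcal E[X]=-\mathbb E[-X]=\inf_\theta E_{P_\theta}[X]$. Countably-dimensional weakly compact: for any bounded $Y_1,Y_2,\dots\in\mathcal H$ and any sequence $\{P_n\}\subset\{P_\theta\}$ there are a subsequence $\{n_k\}$ and $P\in\{P_\theta\}$ with $\lim_kP_{n_k}(\phi(Y_1,\dots,Y_d))=P(\phi(Y_1,\dots,Y_d))$ for every $d$ and bounded continuous $\phi$ on $\mathbb R^d$. Channel: $\boldsymbol P_\lambda=(p_\lambda(y|x))$ transition matrices from $\mathcal X$ to $\mathcal Y$; memoryless means that for inputs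 $X_1,\dots,X_n$ and outputs $Y_1,\dots,Y_n$ on the space, $\{P_\theta(Y_1=y_1,\dots,Y_n=y_n|X_1=x_1,\dots,X_n=x_n)\}_{\theta}=\{\prod_i p_\lambda(y_i|x_i)\}_{\lambda}$ for all $x_i,y_i$. A $(M,n,\varphi_n,\psi_n)$ nonlinear channel code: message set $\mathcal S=\{1,\dots,M\}$, encoder $\varphi_n:\mathcal S\to\mathcal X^n$, decoder $\psi_n:\mathcal Y^n\to\mathcal S$, rate $\frac{\log M}{n}$; message $S$ is a random variable on the space, $\boldsymbol X^n=\varphi_n(S)$, $\boldsymbol Y^n$ the channel output, $\hat S=\psi_n(\boldsymbol Y^n)$, $P^{(n)}_{e,\theta}=P_\theta(\hat S\ne S)$. $\overline C=\sup_p\sup_{\lambda}\sum_{x,y}p(x)p_\lambda(y|x)\log\frac{p_\lambda(y|x)}{\sum_{x'}p(x')p_\lambda(y|x')}$, supremum over distributions $p$ on $\mathcal X$. *)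

theory Defs
  imports "HOL-Probability.Probability"
begin

text \<open>Elements of R^d are represented as extensional functions on the index set
  {..<d}, i.e. elements of PiE {..<d} (\<lambda>_. UNIV), carrying the product
  topology / product Borel sigma algebra.\<close>

definition sle_space :: "('w \<Rightarrow> real) set \<Rightarrow> bool" where
  "sle_space H \<longleftrightarrow>
     (\<forall>c. (\<lambda>\<omega>. c) \<in> H) \<and>
     (\<forall>X\<in>H. \<forall>Y\<in>H. (\<lambda>\<omega>. X \<omega> + Y \<omega>) \<in> H) \<and>
     (\<forall>X\<in>H. \<forall>c. (\<lambda>\<omega>. c * X \<omega>) \<in> H) \<and>
     (\<forall>X\<in>H. (\<lambda>\<omega>. \<bar>X \<omega>\<bar>) \<in> H) \<and>
     (\<forall>d (Xs :: nat \<Rightarrow> 'w \<Rightarrow> real) (f :: (nat \<Rightarrow> real) \<Rightarrow> real).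
        (\<forall>i<d. Xs i \<in> H) \<and> f \<in> borel_measurable (PiM {..<d} (\<lambda>_. borel)) \<and>
        bounded (f ` PiE {..<d} (\<lambda>_. UNIV))
        \<longrightarrow> (\<lambda>\<omega>. f (\<lambda>i\<in>{..<d}. Xs i \<omega>)) \<in> H)"

definition sigmaH :: "('w \<Rightarrow> real) set \<Rightarrow> 'w measure" where
  "sigmaH H = sigma UNIV {X -` B | X B. X \<in> H \<and> B \<in> sets borel}"

definition upper_E :: "('t \<Rightarrow> 'w measure) \<Rightarrow> ('w \<Rightarrow> real) \<Rightarrow> real" where
  "upper_E P X = (SUP \<theta>. integral\<^sup>L (P \<theta>) X)"

definition lower_E :: "('t \<Rightarrow> 'w measure) \<Rightarrow> ('w \<Rightarrow> real) \<Rightarrow> real" where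
  "lower_E P X = - upper_E P (\<lambda>\<omega>. - X \<omega>)"

text \<open>The family {P_theta} is a family of probability measures on (Omega, sigma(H))
  representing the sublinear expectation on H (so that E[X] = sup_theta E_{P_theta}[X]
  is a finite real number for X in H).\<close>
definition represents :: "('w \<Rightarrow> real) set \<Rightarrow> ('t \<Rightarrow> 'w measure) \<Rightarrow> bool" where
  "represents H P \<longleftrightarrow>
     (\<forall>\<theta>. prob_space (P \<theta>) \<and> sets (P \<theta>) = sets (sigmaH H) \<and> space (P \<theta>) = UNIV) \<and>
     (\<forall>X\<in>H. (\<forall>\<theta>. integrable (P \<theta>) X) \<and> bdd_above (range (\<lambda>\<theta>. integral\<^sup>L (P \<theta>) X)))"

definition cd_weakly_compact :: "('w \<Rightarrow> real) set \<Rightarrow> ('t \<Rightarrow> 'w measure) \<Rightarrow> bool" where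
  "cd_weakly_compact H P \<longleftrightarrow>
     (\<forall>(Ys :: nat \<Rightarrow> 'w \<Rightarrow> real) (th :: nat \<Rightarrow> 't).
        (\<forall>k. Ys k \<in> H \<and> bounded (range (Ys k))) \<longrightarrow>
        (\<exists>r \<theta>0. strict_mono r \<and>
           (\<forall>d (\<phi> :: (nat \<Rightarrow> real) \<Rightarrow> real).
              continuous_on (PiE {..<d} (\<lambda>_. UNIV)) \<phi> \<and> bounded (\<phi> ` PiE {..<d} (\<lambda>_. UNIV))
              \<longrightarrow> (\<lambda>k. integral\<^sup>L (P (th (r k))) (\<lambda>\<omega>. \<phi> (\<lambda>i\<in>{..<d}. Ys i \<omega>)))
                    \<longlonglongrightarrow> integral\<^sup>L (P \<theta>0) (\<lambda>\<omega>. \<phi> (\<lambda>i\<in>{..<d}. Ys i \<omega>)))))"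

definition H_rv :: "('w \<Rightarrow> real) set \<Rightarrow> ('w \<Rightarrow> 'a) \<Rightarrow> bool" where
  "H_rv H Z \<longleftrightarrow> (\<forall>a. (indicator {\<omega>. Z \<omega> = a} :: 'w \<Rightarrow> real) \<in> H)"

definition stochastic :: "('l \<Rightarrow> 'x::finite \<Rightarrow> 'y::finite \<Rightarrow> real) \<Rightarrow> bool" where
  "stochastic p \<longleftrightarrow> (\<forall>l x y. 0 \<le> p l x y) \<and> (\<forall>l x. (\<Sum>y\<in>UNIV. p l x y) = 1)"

text \<open>Memoryless relation between inputs X = (X_1..X_n) and outputs Y = (Y_1..Y_n):
  the family of conditional laws {P_theta(Y = ys | X = xs)}_theta coincides with
  the family of product kernels {prod_i p_lambda(y_i|x_i)}_lambda.  Conditional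
  probabilities are written in multiplied-out form (they are only meaningful for
  inputs of positive probability).\<close>
definition kernel_match ::
  "('t \<Rightarrow> 'w measure) \<Rightarrow> ('l \<Rightarrow> 'x \<Rightarrow> 'y \<Rightarrow> real) \<Rightarrow> nat \<Rightarrow>
   ('w \<Rightarrow> 'x list) \<Rightarrow> ('w \<Rightarrow> 'y list) \<Rightarrow> 't \<Rightarrow> 'l \<Rightarrow> bool" where
  "kernel_match P p n X Y \<theta> l \<longleftrightarrow>
     (\<forall>xs ys. length xs = n \<longrightarrow> length ys = n \<longrightarrow>
        measure (P \<theta>) {\<omega>. X \<omega> = xs \<and> Y \<omega> = ys} =
        measure (P \<theta>) {\<omega>. X \<omega> = xs} * (\<Prod>i<n. p l (xs ! i) (ys ! i)))"

definition memoryless ::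
  "('t \<Rightarrow> 'w measure) \<Rightarrow> ('l \<Rightarrow> 'x \<Rightarrow> 'y \<Rightarrow> real) \<Rightarrow> nat \<Rightarrow>
   ('w \<Rightarrow> 'x list) \<Rightarrow> ('w \<Rightarrow> 'y list) \<Rightarrow> bool" where
  "memoryless P p n X Y \<longleftrightarrow>
     (\<forall>\<theta>. \<exists>l. kernel_match P p n X Y \<theta> l) \<and> (\<forall>l. \<exists>\<theta>. kernel_match P p n X Y \<theta> l)"

text \<open>Mutual information (base-2 logarithm; note log 2 0 = 0, giving 0 log 0 = 0).\<close>
definition mutual_info :: "('x::finite \<Rightarrow> real) \<Rightarrow> ('x \<Rightarrow> 'y::finite \<Rightarrow> real) \<Rightarrow> real" where
  "mutual_info q W = (\<Sum>x\<in>UNIV. \<Sum>y\<in>UNIV.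
      q x * W x y * log 2 (W x y / (\<Sum>x'\<in>UNIV. q x' * W x' y)))"

definition is_distr :: "('x::finite \<Rightarrow> real) \<Rightarrow> bool" where
  "is_distr q \<longleftrightarrow> (\<forall>x. 0 \<le> q x) \<and> (\<Sum>x\<in>UNIV. q x) = 1"

definition upper_capacity :: "('l \<Rightarrow> 'x::finite \<Rightarrow> 'y::finite \<Rightarrow> real) \<Rightarrow> real" where
  "upper_capacity p = Sup {mutual_info q (p l) | q l. is_distr q}"

end

(* Fix an input distribution q and a parameter lambda with I(q, p_lambda) > Rc.  For the product
   channel p_lambda^n, Feinstein's greedy maximal-code construction, combined with Chebyshev's
   inequality for the sum of the n i.i.d. information densities, gives for all large n codes of
   rate at least Rc whose maximal error probability under p_lambda^n is below epsilon.
   Memorylessness provides, for any message S and output Y, some theta under which Y given the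
   codeword is distributed according to p_lambda^n; hence P_theta(decoding error) < epsilon, and the
   lower expectation of the error indicator, which is the infimum over theta, is below epsilon. *)

theory Submission
  imports Defs
begin

abbreviation words :: "nat \<Rightarrow> 'a list set" where
  "words n \<equiv> {xs. length xs = n}"

lemma sum_words_Suc:
  fixes F :: "'a::finite list \<Rightarrow> 'b::comm_monoid_add"
  shows "(\<Sum>xs\<in>words (Suc n). F xs) = (\<Sum>x\<in>UNIV. \<Sum>xs\<in>words n. F (x # xs))"
proof -
  have words_Suc: "words (Suc n) = (\<lambda>(x, xs). x # xs) ` (UNIV \<times> words n)"
    by (auto simp: length_Suc_conv image_iff)
  have inj: "inj_on (\<lambda>(x, xs). x # xs) (UNIV \<times> (words n :: 'a list set))"
    by (auto simp: inj_on_def)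
  show ?thesis
    unfolding words_Suc sum.reindex[OF inj] sum.cartesian_product by (simp add: case_prod_beta)
qed

fun prod_kernel :: "('a \<Rightarrow> 'b \<Rightarrow> real) \<Rightarrow> 'a list \<Rightarrow> 'b list \<Rightarrow> real" where
  "prod_kernel W [] [] = 1"
| "prod_kernel W (x # xs) (y # ys) = W x y * prod_kernel W xs ys"
| "prod_kernel W _ _ = 0"

fun pair_sum :: "('a \<Rightarrow> 'b \<Rightarrow> real) \<Rightarrow> 'a list \<Rightarrow> 'b list \<Rightarrow> real" where
  "pair_sum g (x # xs) (y # ys) = g x y + pair_sum g xs ys"
| "pair_sum g _ _ = 0"

lemma prod_kernel_nonneg: "(\<And>x y. 0 \<le> W x y) \<Longrightarrow> 0 \<le> prod_kernel W xs ys"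
  by (induction W xs ys rule: prod_kernel.induct) auto

lemma prod_kernel_eq_prod_nth:
  "length ys = length xs \<Longrightarrow> (\<Prod>i<length xs. W (xs ! i) (ys ! i)) = prod_kernel W xs ys"
proof (induction xs arbitrary: ys)
  case (Cons x xs)
  then obtain y ys' where "ys = y # ys'" by (cases ys) auto
  with Cons show ?case by (simp add: prod.lessThan_Suc_shift del: prod.lessThan_Suc)
qed simp

lemma prod_kernel_mult_input:
  "prod_kernel (\<lambda>x y. q x * W x y) xs ys = prod_list (map q xs) * prod_kernel W xs ys"
  by (induction "\<lambda>x y. q x * W x y" xs ys rule: prod_kernel.induct) auto

lemma pair_sum_diff_const:
  "length xs = length ys \<Longrightarrow> pair_sum (\<lambda>x y. f x y - m) xs ys = pair_sum f xs ys - real (length xs) * m"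
  by (induction f xs ys rule: pair_sum.induct) (auto simp: algebra_simps)

lemma sum_prod_list_words:
  fixes q :: "'a::finite \<Rightarrow> real"
  assumes "(\<Sum>x\<in>UNIV. q x) = 1"
  shows "(\<Sum>xs\<in>words n. prod_list (map q xs)) = 1"
  by (induction n) (simp_all add: sum_words_Suc assms flip: sum_distrib_left sum_distrib_right)

lemma sum_prod_kernel_output:
  fixes W :: "'a \<Rightarrow> 'b::finite \<Rightarrow> real"
  assumes "\<And>x. (\<Sum>y\<in>UNIV. W x y) = 1"
  shows "(\<Sum>ys\<in>words (length xs). prod_kernel W xs ys) = 1"
  by (induction xs) (simp_all add: sum_words_Suc assms flip: sum_distrib_left sum_distrib_right)

definition output_distr :: "('x::finite \<Rightarrow> real) \<Rightarrow> ('x \<Rightarrow> 'y \<Rightarrow> real) \<Rightarrow> 'y \<Rightarrow> real" where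
  "output_distr q W y = (\<Sum>x\<in>UNIV. q x * W x y)"

lemma sum_prod_kernel_input:
  fixes q :: "'a::finite \<Rightarrow> real"
  shows "(\<Sum>xs\<in>words (length ys). prod_list (map q xs) * prod_kernel W xs ys)
       = prod_list (map (output_distr q W) ys)"
proof (induction ys)
  case (Cons y ys)
  have "(\<Sum>xs\<in>words (length (y # ys)). prod_list (map q xs) * prod_kernel W xs (y # ys))
      = (\<Sum>x\<in>UNIV. q x * W x y * (\<Sum>xs\<in>words (length ys). prod_list (map q xs) * prod_kernel W xs ys))"
    by (simp add: sum_words_Suc sum_distrib_left algebra_simps)
  with Cons show ?case by (simp add: output_distr_def sum_distrib_right)
qed simp

lemma sum_prod_kernel_joint:
  fixes r :: "'a::finite \<Rightarrow> 'b::finite \<Rightarrow> real"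
  assumes "(\<Sum>x\<in>UNIV. \<Sum>y\<in>UNIV. r x y) = 1"
  shows "(\<Sum>xs\<in>words n. \<Sum>ys\<in>words n. prod_kernel r xs ys) = 1"
  by (induction n)
    (simp_all add: sum_words_Suc assms sum.swap[of _ UNIV "words _"] flip: sum_distrib_left sum_distrib_right)

lemma sum_prod_kernel_pair_sum:
  fixes r :: "'a::finite \<Rightarrow> 'b::finite \<Rightarrow> real"
  assumes r: "(\<Sum>x\<in>UNIV. \<Sum>y\<in>UNIV. r x y) = 1"
  shows "(\<Sum>xs\<in>words n. \<Sum>ys\<in>words n. prod_kernel r xs ys * pair_sum g xs ys)
       = n * (\<Sum>x\<in>UNIV. \<Sum>y\<in>UNIV. r x y * g x y)"
proof (induction n)
  case (Suc n)
  have "(\<Sum>xs\<in>words (Suc n). \<Sum>ys\<in>words (Suc n). prod_kernel r xs ys * pair_sum g xs ys)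
      = (\<Sum>x\<in>UNIV. \<Sum>y\<in>UNIV. r x y * g x y * (\<Sum>xs\<in>words n. \<Sum>ys\<in>words n. prod_kernel r xs ys)
            + r x y * (\<Sum>xs\<in>words n. \<Sum>ys\<in>words n. prod_kernel r xs ys * pair_sum g xs ys))"
    by (simp add: sum_words_Suc sum_distrib_left sum.swap[of _ UNIV "words n"] algebra_simps sum.distrib)
  also have "\<dots> = Suc n * (\<Sum>x\<in>UNIV. \<Sum>y\<in>UNIV. r x y * g x y)"
    using Suc sum_prod_kernel_joint[OF r, of n] r
    by (simp add: sum.distrib algebra_simps flip: sum_distrib_left sum_distrib_right)
  finally show ?case .
qed simp

lemma sum_prod_kernel_pair_sum_sq:
  fixes r :: "'a::finite \<Rightarrow> 'b::finite \<Rightarrow> real"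
  assumes r: "(\<Sum>x\<in>UNIV. \<Sum>y\<in>UNIV. r x y) = 1"
    and centered: "(\<Sum>x\<in>UNIV. \<Sum>y\<in>UNIV. r x y * g x y) = 0"
  shows "(\<Sum>xs\<in>words n. \<Sum>ys\<in>words n. prod_kernel r xs ys * (pair_sum g xs ys)\<^sup>2)
       = n * (\<Sum>x\<in>UNIV. \<Sum>y\<in>UNIV. r x y * (g x y)\<^sup>2)"
proof (induction n)
  case (Suc n)
  have "(\<Sum>xs\<in>words (Suc n). \<Sum>ys\<in>words (Suc n). prod_kernel r xs ys * (pair_sum g xs ys)\<^sup>2)
      = (\<Sum>x\<in>UNIV. \<Sum>y\<in>UNIV. r x y * (g x y)\<^sup>2 * (\<Sum>xs\<in>words n. \<Sum>ys\<in>words n. prod_kernel r xs ys)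
            + 2 * (r x y * g x y) * (\<Sum>xs\<in>words n. \<Sum>ys\<in>words n. prod_kernel r xs ys * pair_sum g xs ys)
            + r x y * (\<Sum>xs\<in>words n. \<Sum>ys\<in>words n. prod_kernel r xs ys * (pair_sum g xs ys)\<^sup>2))"
    by (simp add: sum_words_Suc sum_distrib_left sum.swap[of _ UNIV "words n"] algebra_simps
        sum.distrib power2_eq_square)
  also have "\<dots> = Suc n * (\<Sum>x\<in>UNIV. \<Sum>y\<in>UNIV. r x y * (g x y)\<^sup>2)"
    using Suc sum_prod_kernel_joint[OF r, of n] sum_prod_kernel_pair_sum[OF r, where n=n and g=g] r centered
    by (simp add: sum.distrib algebra_simps flip: sum_distrib_left sum_distrib_right)
  finally show ?case .
qed simp

lemma sum_chebyshev:
  fixes w f :: "'a \<Rightarrow> real"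
  assumes w: "\<And>a. a \<in> A \<Longrightarrow> 0 \<le> w a" and t: "0 < t"
  shows "(\<Sum>a\<in>A. if t \<le> \<bar>f a\<bar> then w a else 0) \<le> (\<Sum>a\<in>A. w a * (f a)\<^sup>2) / t\<^sup>2"
  unfolding sum_divide_distrib
proof (rule sum_mono)
  fix a assume a: "a \<in> A"
  have "w a \<le> w a * (f a)\<^sup>2 / t\<^sup>2" if "t \<le> \<bar>f a\<bar>"
  proof -
    have "t\<^sup>2 \<le> (f a)\<^sup>2" using that t by (metis abs_ge_zero abs_le_square_iff abs_of_pos)
    then have "1 \<le> (f a)\<^sup>2 / t\<^sup>2" using t by simp
    then show ?thesis using w[OF a] mult_left_mono[of 1 "(f a)\<^sup>2 / t\<^sup>2" "w a"] by simp
  qed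
  then show "(if t \<le> \<bar>f a\<bar> then w a else 0) \<le> w a * (f a)\<^sup>2 / t\<^sup>2"
    using w[OF a] by simp
qed

definition stochastic_matrix :: "('x \<Rightarrow> 'y::finite \<Rightarrow> real) \<Rightarrow> bool" where
  "stochastic_matrix W \<longleftrightarrow> (\<forall>x y. 0 \<le> W x y) \<and> (\<forall>x. (\<Sum>y\<in>UNIV. W x y) = 1)"

definition info_density :: "('x::finite \<Rightarrow> real) \<Rightarrow> ('x \<Rightarrow> 'y \<Rightarrow> real) \<Rightarrow> 'x \<Rightarrow> 'y \<Rightarrow> real" where
  "info_density q W x y = log 2 (W x y / output_distr q W y)"

definition info_variance :: "('x::finite \<Rightarrow> real) \<Rightarrow> ('x \<Rightarrow> 'y::finite \<Rightarrow> real) \<Rightarrow> real" where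
  "info_variance q W =
     (\<Sum>x\<in>UNIV. \<Sum>y\<in>UNIV. q x * W x y * (info_density q W x y - mutual_info q W)\<^sup>2)"

lemma mutual_info_eq_sum_info_density:
  "mutual_info q W = (\<Sum>x\<in>UNIV. \<Sum>y\<in>UNIV. q x * W x y * info_density q W x y)"
  by (simp add: mutual_info_def info_density_def output_distr_def)

lemma pair_sum_info_density:
  fixes q :: "'x::finite \<Rightarrow> real" and W :: "'x \<Rightarrow> 'y \<Rightarrow> real"
  assumes q: "\<And>x. 0 \<le> q x" and W: "\<And>x y. 0 \<le> W x y"
  shows "0 < prod_kernel (\<lambda>x y. q x * W x y) xs ys \<Longrightarrow>
    0 < prod_kernel W xs ys \<and> 0 < prod_list (map (output_distr q W) ys) \<and>
    pair_sum (info_density q W) xs ys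
      = log 2 (prod_kernel W xs ys) - log 2 (prod_list (map (output_distr q W) ys))"
proof (induction "\<lambda>x y. q x * W x y" xs ys rule: prod_kernel.induct)
  case (2 x xs y ys)
  have "0 \<le> prod_kernel (\<lambda>x y. q x * W x y) xs ys" by (rule prod_kernel_nonneg) (simp add: q W)
  with "2.prems" q[of x] W[of x y]
  have pos: "0 < q x * W x y" "0 < prod_kernel (\<lambda>x y. q x * W x y) xs ys"
    by (auto simp: zero_less_mult_iff)
  then have "0 < W x y" using q[of x] W[of x y] by (auto simp: zero_less_mult_iff)
  moreover have "q x * W x y \<le> output_distr q W y"
    unfolding output_distr_def by (rule member_le_sum) (auto simp: q W)
  ultimately show ?case
    using "2.hyps"[OF pos(2)] pos by (auto simp: info_density_def log_mult_pos log_divide_pos)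
qed auto

lemma low_likelihood_ratio_imp_low_info_density:
  fixes q :: "'x::finite \<Rightarrow> real" and W :: "'x \<Rightarrow> 'y::finite \<Rightarrow> real"
  assumes q: "\<And>x. 0 \<le> q x" and W: "\<And>x y. 0 \<le> W x y" and lengths: "length ys = length xs"
    and pos: "0 < prod_kernel (\<lambda>x y. q x * W x y) xs ys"
    and low: "prod_kernel W xs ys
                \<le> 2 powr (real (length xs) * (mutual_info q W - \<delta>)) * prod_list (map (output_distr q W) ys)"
  shows "pair_sum (\<lambda>x y. info_density q W x y - mutual_info q W) xs ys \<le> - (real (length xs) * \<delta>)"
proof -
  have W_pos: "0 < prod_kernel W xs ys" and Y_pos: "0 < prod_list (map (output_distr q W) ys)"
    and density: "pair_sum (info_density q W) xs ys
        = log 2 (prod_kernel W xs ys) - log 2 (prod_list (map (output_distr q W) ys))"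
    using pair_sum_info_density[OF q W pos] by auto
  have "log 2 (prod_kernel W xs ys)
      \<le> log 2 (2 powr (real (length xs) * (mutual_info q W - \<delta>)) * prod_list (map (output_distr q W) ys))"
    using low W_pos by simp
  also have "\<dots> = real (length xs) * (mutual_info q W - \<delta>) + log 2 (prod_list (map (output_distr q W) ys))"
    using Y_pos by (simp add: log_mult_pos)
  finally show ?thesis
    using density lengths pair_sum_diff_const[of xs ys "info_density q W" "mutual_info q W"]
    by (simp add: algebra_simps)
qed

lemma low_info_density_mass_le:
  fixes q :: "'x::finite \<Rightarrow> real" and W :: "'x \<Rightarrow> 'y::finite \<Rightarrow> real"
  assumes "is_distr q" and "stochastic_matrix W" and n: "0 < n" and \<delta>: "0 < \<delta>"
  shows "(\<Sum>xs\<in>words n. \<Sum>ys\<in>words n.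
            if 2 powr (n * (mutual_info q W - \<delta>)) * prod_list (map (output_distr q W) ys)
                 < prod_kernel W xs ys
            then 0 else prod_list (map q xs) * prod_kernel W xs ys)
         \<le> info_variance q W / (n * \<delta>\<^sup>2)"
proof -
  have q: "\<And>x. 0 \<le> q x" "(\<Sum>x\<in>UNIV. q x) = 1"
    and W: "\<And>x y. 0 \<le> W x y" "\<And>x. (\<Sum>y\<in>UNIV. W x y) = 1"
    using assms by (auto simp: is_distr_def stochastic_matrix_def)
  define c where "c = 2 powr (n * (mutual_info q W - \<delta>))"
  define r where "r = (\<lambda>x y. q x * W x y)"
  define g where "g = (\<lambda>x y. info_density q W x y - mutual_info q W)"
  have r_sum: "(\<Sum>x\<in>UNIV. \<Sum>y\<in>UNIV. r x y) = 1"
    using q W by (simp add: r_def flip: sum_distrib_left)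
  have g_centered: "(\<Sum>x\<in>UNIV. \<Sum>y\<in>UNIV. r x y * g x y) = 0"
    using r_sum by (simp add: g_def r_def right_diff_distrib sum_subtractf
        mutual_info_eq_sum_info_density flip: sum_distrib_right)
  have deviation: "(if c * prod_list (map (output_distr q W) ys) < prod_kernel W xs ys
                    then 0 else prod_list (map q xs) * prod_kernel W xs ys)
      \<le> (if n * \<delta> \<le> \<bar>pair_sum g xs ys\<bar> then prod_kernel r xs ys else 0)"
    if "xs \<in> words n" "ys \<in> words n" for xs ys
  proof (cases "0 < prod_kernel r xs ys \<and>
                \<not> c * prod_list (map (output_distr q W) ys) < prod_kernel W xs ys")
    case True
    then have "pair_sum g xs ys \<le> - (n * \<delta>)"
      using low_likelihood_ratio_imp_low_info_density[where q=q and W=W and xs=xs and ys=ys and \<delta>=\<delta>,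
          OF q(1) W(1)] that
      by (simp add: r_def g_def c_def)
    then show ?thesis
      using True n \<delta> by (simp add: r_def prod_kernel_mult_input)
  next
    case False
    then show ?thesis
      using prod_kernel_nonneg[of r xs ys] q W by (auto simp: r_def prod_kernel_mult_input)
  qed
  have "(\<Sum>xs\<in>words n. \<Sum>ys\<in>words n.
            if c * prod_list (map (output_distr q W) ys) < prod_kernel W xs ys
            then 0 else prod_list (map q xs) * prod_kernel W xs ys)
      \<le> (\<Sum>xs\<in>words n. \<Sum>ys\<in>words n. if n * \<delta> \<le> \<bar>pair_sum g xs ys\<bar> then prod_kernel r xs ys else 0)"
    using deviation by (intro sum_mono) auto
  also have "\<dots> \<le> (\<Sum>xs\<in>words n. (\<Sum>ys\<in>words n. prod_kernel r xs ys * (pair_sum g xs ys)\<^sup>2) / (n * \<delta>)\<^sup>2)"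
    using n \<delta> q W by (intro sum_mono sum_chebyshev prod_kernel_nonneg) (auto simp: r_def)
  also have "\<dots> = n * info_variance q W / (n * \<delta>)\<^sup>2"
    using sum_prod_kernel_pair_sum_sq[OF r_sum g_centered, of n]
    by (simp add: info_variance_def r_def g_def flip: sum_divide_distrib)
  also have "\<dots> = info_variance q W / (n * \<delta>\<^sup>2)"
    using n by (simp add: power2_eq_square)
  finally show ?thesis by (simp add: c_def)
qed

definition is_code ::
  "'a set \<Rightarrow> 'b set \<Rightarrow> ('a \<Rightarrow> 'b \<Rightarrow> real) \<Rightarrow> real \<Rightarrow> nat \<Rightarrow> (nat \<Rightarrow> 'a) \<Rightarrow> (nat \<Rightarrow> 'b set) \<Rightarrow> bool"
where
  "is_code A B W e M x D \<longleftrightarrow>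
     (\<forall>j\<in>{1..M}. x j \<in> A \<and> D j \<subseteq> B \<and> 1 - e \<le> (\<Sum>b\<in>D j. W (x j) b)) \<and> disjoint_family_on D {1..M}"

lemma code_size_le_card:
  assumes code: "is_code A B W e M x D" and B: "finite B" and e: "e < 1"
  shows "M \<le> card B"
proof -
  have DB: "D j \<subseteq> B" and ge: "1 - e \<le> (\<Sum>b\<in>D j. W (x j) b)" if "j \<in> {1..M}" for j
    using that code by (auto simp: is_code_def)
  have fin: "finite (D j)" and ne: "D j \<noteq> {}" if "j \<in> {1..M}" for j
    using DB[OF that] ge[OF that] B e by (auto intro: finite_subset)
  have "M = (\<Sum>j\<in>{1..M}. 1)" by simp
  also have "\<dots> \<le> (\<Sum>j\<in>{1..M}. card (D j))"
    using fin ne by (intro sum_mono) (simp add: Suc_le_eq card_gt_0_iff)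
  also have "\<dots> = card (\<Union>j\<in>{1..M}. D j)"
    using code fin by (intro card_UN_disjoint' [symmetric]) (auto simp: is_code_def)
  also have "\<dots> \<le> card B"
    using DB by (intro card_mono[OF B]) blast
  finally show ?thesis .
qed

lemma code_inj:
  assumes code: "is_code A B W e M x D" and B: "finite B" and e: "e < 1/2"
    and W: "\<And>a b. 0 \<le> W a b" "\<And>a. a \<in> A \<Longrightarrow> (\<Sum>b\<in>B. W a b) = 1"
  shows "inj_on x {1..M}"
proof (rule inj_onI, rule ccontr)
  fix j k assume j: "j \<in> {1..M}" and k: "k \<in> {1..M}" and xjk: "x j = x k" and "j \<noteq> k"
  have disj: "D j \<inter> D k = {}" and DB: "D j \<subseteq> B" "D k \<subseteq> B" and A: "x j \<in> A"
    and ge: "1 - e \<le> (\<Sum>b\<in>D j. W (x j) b)" "1 - e \<le> (\<Sum>b\<in>D k. W (x k) b)"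
    using code j k \<open>j \<noteq> k\<close> by (auto simp: is_code_def disjoint_family_on_def)
  have fin: "finite (D j)" "finite (D k)" using DB B by (auto intro: finite_subset)
  have "2 - 2 * e \<le> (\<Sum>b\<in>D j \<union> D k. W (x j) b)"
    using ge xjk by (simp add: sum.union_disjoint[OF fin disj])
  also have "\<dots> \<le> (\<Sum>b\<in>B. W (x j) b)"
    using DB B W(1) by (intro sum_mono2) auto
  also have "\<dots> = 1" using W(2)[OF A] .
  finally show False using e by simp
qed

lemma is_code_extend:
  assumes code: "is_code A B W e M x D" and "a \<in> A" "E \<subseteq> B"
    and "E \<inter> (\<Union>j\<in>{1..M}. D j) = {}" and "1 - e \<le> (\<Sum>b\<in>E. W a b)"
  shows "is_code A B W e (Suc M) (x(Suc M := a)) (D(Suc M := E))"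
proof -
  have "disjoint_family_on (D(Suc M := E)) {1..M}"
    using code by (auto simp: is_code_def disjoint_family_on_def)
  then have "disjoint_family_on (D(Suc M := E)) (insert (Suc M) {1..M})"
    using assms(4) by (subst disjoint_family_on_insert) auto
  moreover have "{1..Suc M} = insert (Suc M) {1..M}" by auto
  ultimately show ?thesis
    using code assms(2,3,5) by (auto simp: is_code_def)
qed

lemma maximal_code_exists:
  assumes B: "finite B" and e: "e < 1" and T: "\<And>a. T a \<subseteq> B"
  shows "\<exists>M x D. is_code A B W e M x D \<and> (\<forall>j\<in>{1..M}. D j \<subseteq> T (x j)) \<and>
           (\<forall>a\<in>A. (\<Sum>b\<in>T a - (\<Union>j\<in>{1..M}. D j). W a b) < 1 - e)"
proof -
  define good where "good M \<longleftrightarrow> (\<exists>x D. is_code A B W e M x D \<and> (\<forall>j\<in>{1..M}. D j \<subseteq> T (x j)))"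
    for M
  have "good 0" by (auto simp: good_def is_code_def disjoint_family_on_def)
  have good_le: "M \<le> card B" if "good M" for M
    using that code_size_le_card[OF _ B e] unfolding good_def by blast
  then have "Collect good \<subseteq> {..card B}" by auto
  then have fin: "finite (Collect good)" by (rule finite_subset) simp
  define m where "m = Max (Collect good)"
  have m_ge: "M \<le> m" if "good M" for M
    unfolding m_def using fin that by simp
  have "good m"
    unfolding m_def using Max_in[OF fin] \<open>good 0\<close> by blast
  then obtain x D where code: "is_code A B W e m x D" and DT: "\<forall>j\<in>{1..m}. D j \<subseteq> T (x j)"
    unfolding good_def by blast
  have "(\<Sum>b\<in>T a - (\<Union>j\<in>{1..m}. D j). W a b) < 1 - e" if "a \<in> A" for a
  proof (rule ccontr)
    assume "\<not> ?thesis"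
    then have "is_code A B W e (Suc m) (x(Suc m := a)) (D(Suc m := T a - (\<Union>j\<in>{1..m}. D j)))"
      using T that by (intro is_code_extend[OF code]) auto
    moreover have "\<forall>j\<in>{1..Suc m}. (D(Suc m := T a - (\<Union>j\<in>{1..m}. D j))) j \<subseteq> T ((x(Suc m := a)) j)"
      using DT by auto
    ultimately have "good (Suc m)" unfolding good_def by blast
    then show False using m_ge by fastforce
  qed
  then show ?thesis using code DT by blast
qed

lemma decoding_sets_output_mass_le:
  assumes code: "is_code A B W e M x D" and B: "finite B"
    and W: "\<And>a b. 0 \<le> W a b" "\<And>a. a \<in> A \<Longrightarrow> (\<Sum>b\<in>B. W a b) = 1"
    and c: "0 < c" and above: "\<And>j b. j \<in> {1..M} \<Longrightarrow> b \<in> D j \<Longrightarrow> c * PY b < W (x j) b"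
  shows "(\<Sum>b\<in>(\<Union>j\<in>{1..M}. D j). PY b) \<le> M / c"
proof -
  have DB: "D j \<subseteq> B" and xA: "x j \<in> A" if "j \<in> {1..M}" for j
    using code that by (auto simp: is_code_def)
  then have fin: "finite (D j)" if "j \<in> {1..M}" for j
    using that B by (blast intro: finite_subset)
  have "(\<Sum>b\<in>(\<Union>j\<in>{1..M}. D j). PY b) = (\<Sum>j\<in>{1..M}. \<Sum>b\<in>D j. PY b)"
    using code fin by (intro sum.UNION_disjoint_family) (auto simp: is_code_def)
  also have "\<dots> \<le> (\<Sum>j\<in>{1..M}. \<Sum>b\<in>D j. W (x j) b / c)"
    using above c by (intro sum_mono) (simp add: field_simps less_imp_le)
  also have "\<dots> \<le> (\<Sum>j\<in>{1..M}. 1 / c)"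
  proof (rule sum_mono)
    fix j assume j: "j \<in> {1..M}"
    have "(\<Sum>b\<in>D j. W (x j) b) \<le> (\<Sum>b\<in>B. W (x j) b)"
      using DB[OF j] B W(1) by (intro sum_mono2) auto
    then show "(\<Sum>b\<in>D j. W (x j) b / c) \<le> 1 / c"
      using W(2)[OF xA[OF j]] c by (simp add: divide_right_mono flip: sum_divide_distrib)
  qed
  finally show ?thesis by simp
qed

lemma feinstein_lemma:
  fixes Q :: "'a \<Rightarrow> real" and W :: "'a \<Rightarrow> 'b \<Rightarrow> real"
  assumes B: "finite B"
    and Q: "\<And>a. 0 \<le> Q a" "(\<Sum>a\<in>A. Q a) = 1"
    and W: "\<And>a b. 0 \<le> W a b" "\<And>a. a \<in> A \<Longrightarrow> (\<Sum>b\<in>B. W a b) = 1"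
    and c: "c > 0" and e: "e < 1"
  defines "PY b \<equiv> \<Sum>a\<in>A. Q a * W a b"
  shows "\<exists>M x D. is_code A B W e M x D \<and>
           e - (\<Sum>a\<in>A. \<Sum>b\<in>B. if c * PY b < W a b then 0 else Q a * W a b) \<le> M / c"
proof -
  define T where "T a = {b\<in>B. c * PY b < W a b}" for a
  obtain M x D where code: "is_code A B W e M x D" and DT: "\<forall>j\<in>{1..M}. D j \<subseteq> T (x j)"
    and maximal: "\<forall>a\<in>A. (\<Sum>b\<in>T a - (\<Union>j\<in>{1..M}. D j). W a b) < 1 - e"
    using maximal_code_exists[OF B e, of T A W] by (auto simp: T_def)
  define U where "U = (\<Union>j\<in>{1..M}. D j)"
  have UB: "U \<subseteq> B" using code by (auto simp: U_def is_code_def)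
  have PY_U: "(\<Sum>b\<in>U. PY b) \<le> M / c"
    unfolding U_def using DT by (intro decoding_sets_output_mass_le[OF code B W c]) (auto simp: T_def)
  have mass_above_threshold: "Q a * (\<Sum>b\<in>B. W a b) - (\<Sum>b\<in>B. if c * PY b < W a b then 0 else Q a * W a b)
      = Q a * (\<Sum>b\<in>T a. W a b)" for a
  proof -
    have "Q a * (\<Sum>b\<in>B. W a b) = (\<Sum>b\<in>B. if c * PY b < W a b then Q a * W a b else 0)
        + (\<Sum>b\<in>B. if c * PY b < W a b then 0 else Q a * W a b)"
      unfolding sum_distrib_left sum.distrib[symmetric] by (rule sum.cong) auto
    moreover have "(\<Sum>b\<in>B. if c * PY b < W a b then Q a * W a b else 0) = Q a * (\<Sum>b\<in>T a. W a b)"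
      by (simp add: T_def sum.inter_filter[OF B, symmetric] sum_distrib_left if_distrib)
    ultimately show ?thesis by simp
  qed
  have "1 - (\<Sum>a\<in>A. \<Sum>b\<in>B. if c * PY b < W a b then 0 else Q a * W a b)
      = (\<Sum>a\<in>A. Q a * (\<Sum>b\<in>B. W a b)) - (\<Sum>a\<in>A. \<Sum>b\<in>B. if c * PY b < W a b then 0 else Q a * W a b)"
    using Q W by simp
  also have "\<dots> = (\<Sum>a\<in>A. Q a * (\<Sum>b\<in>T a. W a b))"
    by (simp add: mass_above_threshold flip: sum_subtractf)
  also have "\<dots> \<le> (\<Sum>a\<in>A. Q a * ((\<Sum>b\<in>U. W a b) + (1 - e)))"
  proof (intro sum_mono mult_left_mono Q)
    fix a assume a: "a \<in> A"
    have "T a \<subseteq> B" by (auto simp: T_def)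
    then have "(\<Sum>b\<in>T a. W a b) = (\<Sum>b\<in>T a \<inter> U. W a b) + (\<Sum>b\<in>T a - U. W a b)"
      using B by (metis finite_subset sum.Int_Diff)
    also have "\<dots> \<le> (\<Sum>b\<in>U. W a b) + (1 - e)"
      using maximal a UB B W(1) by (intro add_mono sum_mono2) (auto simp: U_def intro: finite_subset)
    finally show "(\<Sum>b\<in>T a. W a b) \<le> (\<Sum>b\<in>U. W a b) + (1 - e)" .
  qed
  also have "\<dots> = (\<Sum>a\<in>A. \<Sum>b\<in>U. Q a * W a b) + (1 - e)"
    by (simp add: distrib_left sum.distrib sum_distrib_left Q flip: sum_distrib_right)
  also have "\<dots> = (\<Sum>b\<in>U. PY b) + (1 - e)"
    unfolding PY_def by (subst sum.swap) (rule refl)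
  finally show ?thesis using code PY_U by (intro exI) auto
qed

lemma product_channel_code_exists:
  fixes q :: "'x::finite \<Rightarrow> real" and W :: "'x \<Rightarrow> 'y::finite \<Rightarrow> real"
  assumes "is_distr q" and "stochastic_matrix W" and n: "0 < n" and \<delta>: "0 < \<delta>" and e: "e < 1"
  shows "\<exists>M x D. is_code (words n) (words n) (prod_kernel W) e M x D \<and>
           2 powr (n * (mutual_info q W - \<delta>)) * (e - info_variance q W / (n * \<delta>\<^sup>2)) \<le> M"
proof -
  have q: "\<And>x. 0 \<le> q x" "(\<Sum>x\<in>UNIV. q x) = 1"
    and W: "\<And>x y. 0 \<le> W x y" "\<And>x. (\<Sum>y\<in>UNIV. W x y) = 1"
    using assms by (auto simp: is_distr_def stochastic_matrix_def)
  define c where "c = 2 powr (n * (mutual_info q W - \<delta>))"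
  have c: "0 < c" by (simp add: c_def)
  have output_eq: "(\<Sum>xs\<in>words n. prod_list (map q xs) * prod_kernel W xs ys)
      = prod_list (map (output_distr q W) ys)" if "ys \<in> words n" for ys
    using that sum_prod_kernel_input[of q W ys] by simp
  obtain M x D where code: "is_code (words n) (words n) (prod_kernel W) e M x D"
    and size: "e - (\<Sum>xs\<in>words n. \<Sum>ys\<in>words n.
                  if c * (\<Sum>xs'\<in>words n. prod_list (map q xs') * prod_kernel W xs' ys) < prod_kernel W xs ys
                  then 0 else prod_list (map q xs) * prod_kernel W xs ys) \<le> M / c"
  proof -
    have "0 \<le> prod_list (map q xs)" for xs
      by (rule prod_list_nonneg) (auto simp: q)
    moreover have "(\<Sum>ys\<in>words n. prod_kernel W xs ys) = 1" if "xs \<in> words n" for xs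
      using sum_prod_kernel_output[of W xs] W(2) that by simp
    ultimately show ?thesis
      using that feinstein_lemma[where A="words n" and B="words n" and Q="\<lambda>xs. prod_list (map q xs)"
          and W="prod_kernel W" and c=c and e=e, OF finite_list_length _
          sum_prod_list_words[OF q(2)] prod_kernel_nonneg[of W, OF W(1)] _ c e]
      by blast
  qed
  have "(\<Sum>xs\<in>words n. \<Sum>ys\<in>words n.
                  if c * (\<Sum>xs'\<in>words n. prod_list (map q xs') * prod_kernel W xs' ys) < prod_kernel W xs ys
                  then 0 else prod_list (map q xs) * prod_kernel W xs ys)
      = (\<Sum>xs\<in>words n. \<Sum>ys\<in>words n.
                  if c * prod_list (map (output_distr q W) ys) < prod_kernel W xs ys
                  then 0 else prod_list (map q xs) * prod_kernel W xs ys)"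
    using output_eq by (intro sum.cong refl) simp
  then have "e - info_variance q W / (n * \<delta>\<^sup>2) \<le> M / c"
    using size low_info_density_mass_le[OF assms(1,2) n \<delta>] by (simp add: c_def)
  then show ?thesis using code c by (auto simp: c_def field_simps)
qed

lemma rate_le_log_code_size:
  fixes M n :: nat and Rc \<delta> a :: real
  assumes size: "2 powr (n * (Rc + \<delta>)) * a \<le> M" and a: "0 < a"
    and n: "0 < n" and large: "- log 2 a \<le> n * \<delta>"
  shows "1 \<le> M" and "Rc \<le> log 2 M / n"
proof -
  have pos: "0 < 2 powr (n * (Rc + \<delta>)) * a" using a by simp
  then show "1 \<le> M" using size by linarith
  have "n * (Rc + \<delta>) + log 2 a = log 2 (2 powr (n * (Rc + \<delta>)) * a)"
    using a by (subst log_mult_pos) auto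
  also have "\<dots> \<le> log 2 M"
    using size pos by (subst log_le_cancel_iff) auto
  finally have "n * Rc \<le> log 2 M"
    using large by (simp add: algebra_simps)
  then show "Rc \<le> log 2 M / n" using n by (simp add: field_simps)
qed

lemma channel_coding_max_error:
  fixes q :: "'x::finite \<Rightarrow> real" and W :: "'x \<Rightarrow> 'y::finite \<Rightarrow> real"
  assumes q: "is_distr q" and W: "stochastic_matrix W"
    and R: "Rc < mutual_info q W" and e: "0 < e" "e < 1/2"
  shows "\<exists>N. \<forall>n\<ge>N. \<exists>M x D. 1 \<le> n \<and> 1 \<le> M \<and> Rc \<le> log 2 M / n \<and>
           is_code (words n) (words n) (prod_kernel W) e M x D \<and> inj_on x {1..M}"
proof -
  define \<delta> where "\<delta> = (mutual_info q W - Rc) / 2"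
  have \<delta>: "0 < \<delta>" using R by (simp add: \<delta>_def)
  define N where
    "N = nat \<lceil>max (2 * info_variance q W / (\<delta>\<^sup>2 * e)) (- log 2 (e / 2) / \<delta>)\<rceil> + 1"
  have "\<exists>M x D. 1 \<le> n \<and> 1 \<le> M \<and> Rc \<le> log 2 M / n \<and>
          is_code (words n) (words n) (prod_kernel W) e M x D \<and> inj_on x {1..M}" if "N \<le> n" for n
  proof -
    have n: "0 < n" using that by (simp add: N_def)
    have "2 * info_variance q W / (\<delta>\<^sup>2 * e) \<le> n" and "- log 2 (e / 2) / \<delta> \<le> n"
      using that unfolding N_def by linarith+
    then have small_var: "info_variance q W / (n * \<delta>\<^sup>2) \<le> e / 2"
      and small_log: "- log 2 (e / 2) \<le> n * \<delta>"
      using n \<delta> e by (simp_all add: field_simps)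
    obtain M x D where code: "is_code (words n) (words n) (prod_kernel W) e M x D"
      and size: "2 powr (n * (mutual_info q W - \<delta>)) * (e - info_variance q W / (n * \<delta>\<^sup>2)) \<le> M"
      using product_channel_code_exists[OF q W n \<delta>, of e] e by fastforce
    have split: "mutual_info q W - \<delta> = Rc + \<delta>" by (simp add: \<delta>_def field_simps)
    have "2 powr (n * (Rc + \<delta>)) * (e / 2)
        \<le> 2 powr (n * (mutual_info q W - \<delta>)) * (e - info_variance q W / (n * \<delta>\<^sup>2))"
      unfolding split using small_var by (intro mult_left_mono) auto
    also have "\<dots> \<le> M" by (fact size)
    finally have "1 \<le> M" and "Rc \<le> log 2 M / n"
      using rate_le_log_code_size[OF _ _ n small_log] e by auto
    moreover have "inj_on x {1..M}"
      using code_inj[OF code finite_list_length e(2)] sum_prod_kernel_output[of W] W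
      by (auto simp: stochastic_matrix_def prod_kernel_nonneg)
    ultimately show ?thesis using n code by (intro exI[of _ M] exI[of _ x] exI[of _ D]) auto
  qed
  then show ?thesis by blast
qed

lemma decoder_exists:
  fixes M :: nat
  assumes disj: "disjoint_family_on D {1..M}" and M: "1 \<le> M"
  shows "\<exists>\<psi>. (\<forall>ys. \<psi> ys \<in> {1..M}) \<and> (\<forall>s\<in>{1..M}. \<forall>ys\<in>D s. \<psi> ys = s)"
proof -
  have "\<exists>s\<in>{1..M}. \<forall>s'\<in>{1..M}. ys \<in> D s' \<longrightarrow> s' = s" for ys
  proof (cases "\<exists>s\<in>{1..M}. ys \<in> D s")
    case True
    then obtain s where "s \<in> {1..M}" "ys \<in> D s" by blast
    with disj show ?thesis unfolding disjoint_family_on_def by blast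
  next
    case False
    with M show ?thesis by (intro bexI[of _ "1::nat"]) auto
  qed
  then obtain \<psi> where "\<forall>ys. \<psi> ys \<in> {1..M} \<and> (\<forall>s\<in>{1..M}. ys \<in> D s \<longrightarrow> s = \<psi> ys)"
    by metis
  then show ?thesis by (intro exI[of _ \<psi>]) auto
qed

lemma H_rv_level_set_in_sets:
  assumes "represents H P" and "H_rv H Z"
  shows "{\<omega>. Z \<omega> = a} \<in> sets (P \<theta>)"
proof -
  have "(indicator {\<omega>. Z \<omega> = a} :: _ \<Rightarrow> real) \<in> H"
    using assms(2) by (simp add: H_rv_def)
  moreover have "{\<omega>. Z \<omega> = a} = (indicator {\<omega>. Z \<omega> = a} :: _ \<Rightarrow> real) -` {1}"
    by (auto simp: indicator_def)
  ultimately have "{\<omega>. Z \<omega> = a} \<in> {X -` B | X B. X \<in> H \<and> B \<in> sets borel}"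
    by (intro CollectI exI[of _ "indicator {\<omega>. Z \<omega> = a} :: _ \<Rightarrow> real"] exI[of _ "{1::real}"]) simp
  then have "{\<omega>. Z \<omega> = a} \<in> sets (sigmaH H)"
    unfolding sigmaH_def by (simp add: sigma_sets.Basic)
  then show ?thesis using assms(1) by (simp add: represents_def)
qed

(* Memorylessness conditions on the codeword x (S w), not on the message S w: this is where
   injectivity of the encoder is needed. *)
lemma kernel_match_codeword:
  assumes km: "kernel_match P p n (\<lambda>\<omega>. x (S \<omega>)) Y \<theta> l"
    and inj: "inj_on x {1..M}" and S: "\<forall>\<omega>. S \<omega> \<in> {1..M}"
    and s: "s \<in> {1..M}" and lengths: "length (x s) = n" "length ys = n"
  shows "measure (P \<theta>) {\<omega>. S \<omega> = s \<and> Y \<omega> = ys}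
       = measure (P \<theta>) {\<omega>. S \<omega> = s} * prod_kernel (p l) (x s) ys"
proof -
  have "measure (P \<theta>) {\<omega>. x (S \<omega>) = x s \<and> Y \<omega> = ys}
      = measure (P \<theta>) {\<omega>. x (S \<omega>) = x s} * (\<Prod>i<n. p l (x s ! i) (ys ! i))"
    using km lengths unfolding kernel_match_def by blast
  moreover have "x (S \<omega>) = x s \<longleftrightarrow> S \<omega> = s" for \<omega>
    using inj S s by (auto dest: inj_onD)
  ultimately show ?thesis
    using lengths prod_kernel_eq_prod_nth[of ys "x s" "p l"] by simp
qed

lemma code_error_mass_le:
  assumes code: "is_code (words n) (words n) (prod_kernel W) e M x D" and W: "stochastic_matrix W"
    and s: "s \<in> {1..M}"
  shows "(\<Sum>ys\<in>words n - D s. prod_kernel W (x s) ys) \<le> e"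
proof -
  have "x s \<in> words n" "D s \<subseteq> words n" "1 - e \<le> (\<Sum>ys\<in>D s. prod_kernel W (x s) ys)"
    using code s by (auto simp: is_code_def)
  moreover have "(\<Sum>ys\<in>words (length (x s)). prod_kernel W (x s) ys) = 1"
    using W by (intro sum_prod_kernel_output) (auto simp: stochastic_matrix_def)
  ultimately show ?thesis
    by (simp add: sum_diff finite_list_length)
qed

lemma memoryless_decoding_error_le:
  assumes rep: "represents H P" and HS: "H_rv H S" and HY: "H_rv H Y"
    and S: "\<forall>\<omega>. S \<omega> \<in> {1..M}" and Y: "\<forall>\<omega>. length (Y \<omega>) = n"
    and code: "is_code (words n) (words n) (prod_kernel (p l)) e M x D" and inj: "inj_on x {1..M}"
    and decoder: "\<forall>s\<in>{1..M}. \<forall>ys\<in>D s. \<psi> ys = s"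
    and km: "kernel_match P p n (\<lambda>\<omega>. x (S \<omega>)) Y \<theta> l"
    and W: "stochastic_matrix (p l)" and e: "0 \<le> e"
  shows "measure (P \<theta>) {\<omega>. \<psi> (Y \<omega>) \<noteq> S \<omega>} \<le> e"
proof -
  interpret prob_space "P \<theta>" using rep by (simp add: represents_def)
  define I where "I = Sigma {1..M} (\<lambda>s. words n - D s)"
  define A where "A = (\<lambda>(s, ys). {\<omega>. S \<omega> = s \<and> Y \<omega> = ys})"
  have level_sets: "{\<omega>. S \<omega> = s} \<in> events" "{\<omega>. Y \<omega> = ys} \<in> events" for s ys
    using H_rv_level_set_in_sets[OF rep HS] H_rv_level_set_in_sets[OF rep HY] by auto
  have "(S \<omega>, Y \<omega>) \<in> I" if "\<psi> (Y \<omega>) \<noteq> S \<omega>" for \<omega>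
    using that S Y decoder by (auto simp: I_def)
  then have "{\<omega>. \<psi> (Y \<omega>) \<noteq> S \<omega>} \<subseteq> (\<Union>i\<in>I. A i)"
    by (fastforce simp: A_def)
  then have "prob {\<omega>. \<psi> (Y \<omega>) \<noteq> S \<omega>} \<le> prob (\<Union>i\<in>I. A i)"
    using level_sets by (intro finite_measure_mono) (auto simp: A_def Collect_conj_eq)
  also have "\<dots> \<le> (\<Sum>i\<in>I. prob (A i))"
    using level_sets by (intro measure_UNION_le) (auto simp: I_def A_def Collect_conj_eq finite_list_length)
  also have "\<dots> = (\<Sum>s\<in>{1..M}. \<Sum>ys\<in>words n - D s. prob (A (s, ys)))"
    unfolding I_def by (subst sum.Sigma) (auto simp: finite_list_length)
  also have "\<dots> = (\<Sum>s\<in>{1..M}. prob {\<omega>. S \<omega> = s} * (\<Sum>ys\<in>words n - D s. prod_kernel (p l) (x s) ys))"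
    unfolding A_def sum_distrib_left using code
    by (intro sum.cong refl) (auto simp: is_code_def intro!: kernel_match_codeword[OF km inj S])
  also have "\<dots> \<le> (\<Sum>s\<in>{1..M}. prob {\<omega>. S \<omega> = s} * e)"
    using code_error_mass_le[OF code W] by (intro sum_mono mult_left_mono) auto
  also have "\<dots> = e * prob (\<Union>s\<in>{1..M}. {\<omega>. S \<omega> = s})"
    using level_sets
    by (subst finite_measure_finite_Union) (auto simp: disjoint_family_on_def sum_distrib_left mult.commute)
  also have "\<dots> \<le> e"
    using e prob_le_1 by (simp add: mult_left_le)
  finally show ?thesis .
qed

lemma memoryless_INF_decoding_error_le:
  assumes rep: "represents H P" and ml: "memoryless P p n (\<lambda>\<omega>. x (S \<omega>)) Y"
    and HS: "H_rv H S" and HY: "H_rv H Y"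
    and S: "\<forall>\<omega>. S \<omega> \<in> {1..M}" and Y: "\<forall>\<omega>. length (Y \<omega>) = n"
    and code: "is_code (words n) (words n) (prod_kernel (p l)) e M x D" and inj: "inj_on x {1..M}"
    and decoder: "\<forall>s\<in>{1..M}. \<forall>ys\<in>D s. \<psi> ys = s"
    and W: "stochastic_matrix (p l)" and e: "0 \<le> e"
  shows "(INF \<theta>. measure (P \<theta>) {\<omega>. \<psi> (Y \<omega>) \<noteq> S \<omega>}) \<le> e"
proof -
  obtain \<theta> where km: "kernel_match P p n (\<lambda>\<omega>. x (S \<omega>)) Y \<theta> l"
    using ml by (auto simp: memoryless_def)
  have "measure (P \<theta>) {\<omega>. \<psi> (Y \<omega>) \<noteq> S \<omega>} \<le> e"
    by (rule memoryless_decoding_error_le[OF rep HS HY S Y code inj decoder km W e])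
  moreover have "(INF \<theta>. measure (P \<theta>) {\<omega>. \<psi> (Y \<omega>) \<noteq> S \<omega>}) \<le> measure (P \<theta>) {\<omega>. \<psi> (Y \<omega>) \<noteq> S \<omega>}"
    by (rule cINF_lower) (auto intro: bdd_belowI[where m=0])
  ultimately show ?thesis by linarith
qed

lemma lower_E_indicator:
  assumes "represents H P"
  shows "lower_E P (indicator E) = (INF \<theta>. measure (P \<theta>) E)"
proof -
  have "lower_E P (indicator E) = - (SUP \<theta>. - measure (P \<theta>) E)"
    unfolding lower_E_def upper_E_def using assms by (simp add: represents_def)
  also have "\<dots> = (INF \<theta>. measure (P \<theta>) E)"
    by (simp add: Inf_real_def image_image)
  finally show ?thesis .
qed

lemma less_upper_capacityE:
  fixes p :: "'l \<Rightarrow> 'x::finite \<Rightarrow> 'y::finite \<Rightarrow> real"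
  assumes "Rc < upper_capacity p"
  obtains q l where "is_distr q" and "Rc < mutual_info q (p l)"
proof -
  have "is_distr (\<lambda>x::'x. 1 / real CARD('x))" by (simp add: is_distr_def)
  then have "{mutual_info q (p l) | q l. is_distr q} \<noteq> {}" by blast
  with assms obtain r where "r \<in> {mutual_info q (p l) | q l. is_distr q}" and "Rc < r"
    unfolding upper_capacity_def by (blast elim: less_cSupE)
  with that show ?thesis by blast
qed

theorem theorem12:
  fixes H :: "('w \<Rightarrow> real) set"
    and P :: "'t \<Rightarrow> 'w measure"
    and p :: "'l \<Rightarrow> 'x::finite \<Rightarrow> 'y::finite \<Rightarrow> real"
    and Rc \<epsilon> :: real
  assumes "sle_space H"
    and "represents H P"
    and "cd_weakly_compact H P"
    and "stochastic p"
    and "Rc < upper_capacity p"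
    and "\<epsilon> > 0"
  shows "\<exists>N. \<forall>n\<ge>N. \<exists>(M::nat) (\<phi>::nat \<Rightarrow> 'x list) (\<psi>::'y list \<Rightarrow> nat).
           n \<ge> 1 \<and> M \<ge> 1 \<and> Rc \<le> log 2 (real M) / real n \<and>
           (\<forall>s\<in>{1..M}. length (\<phi> s) = n) \<and>
           (\<forall>ys. length ys = n \<longrightarrow> \<psi> ys \<in> {1..M}) \<and>
           (\<forall>(S::'w \<Rightarrow> nat) (Y::'w \<Rightarrow> 'y list).
              H_rv H S \<and> H_rv H Y \<and> (\<forall>\<omega>. S \<omega> \<in> {1..M}) \<and> (\<forall>\<omega>. length (Y \<omega>) = n) \<and>
              memoryless P p n (\<lambda>\<omega>. \<phi> (S \<omega>)) Y
              \<longrightarrow> lower_E P (indicator {\<omega>. \<psi> (Y \<omega>) \<noteq> S \<omega>})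
                    = (INF \<theta>. measure (P \<theta>) {\<omega>. \<psi> (Y \<omega>) \<noteq> S \<omega>})
                  \<and> (INF \<theta>. measure (P \<theta>) {\<omega>. \<psi> (Y \<omega>) \<noteq> S \<omega>}) < \<epsilon>)"
proof -
  obtain q l where q: "is_distr q" and R: "Rc < mutual_info q (p l)"
    using less_upper_capacityE[OF assms(5)] .
  have W: "stochastic_matrix (p l)"
    using assms(4) by (simp add: stochastic_def stochastic_matrix_def)
  define e where "e = min (\<epsilon> / 2) (1 / 3)"
  have e: "0 < e" "e < 1 / 2" "e < \<epsilon>" using assms(6) by (auto simp: e_def)
  obtain N where N: "\<forall>n\<ge>N. \<exists>M x D. 1 \<le> n \<and> 1 \<le> M \<and> Rc \<le> log 2 M / n \<and>
      is_code (words n) (words n) (prod_kernel (p l)) e M x D \<and> inj_on x {1..M}"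
    using channel_coding_max_error[OF q W R e(1,2)] by blast
  show ?thesis
  proof (rule exI[of _ N], intro allI impI, goal_cases)
    case (1 n)
    then obtain M x D where n: "1 \<le> n" and M: "1 \<le> M" and rate: "Rc \<le> log 2 M / n"
      and code: "is_code (words n) (words n) (prod_kernel (p l)) e M x D" and inj: "inj_on x {1..M}"
      using N by blast
    obtain \<psi> where \<psi>: "\<forall>ys. \<psi> ys \<in> {1..M}" and decoder: "\<forall>s\<in>{1..M}. \<forall>ys\<in>D s. \<psi> ys = s"
      using decoder_exists[of D M] code M by (auto simp: is_code_def)
    have lengths: "\<forall>s\<in>{1..M}. length (x s) = n" using code by (auto simp: is_code_def)
    have error: "lower_E P (indicator {\<omega>. \<psi> (Y \<omega>) \<noteq> S \<omega>}) = (INF \<theta>. measure (P \<theta>) {\<omega>. \<psi> (Y \<omega>) \<noteq> S \<omega>})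
        \<and> (INF \<theta>. measure (P \<theta>) {\<omega>. \<psi> (Y \<omega>) \<noteq> S \<omega>}) < \<epsilon>"
      if "H_rv H S \<and> H_rv H Y \<and> (\<forall>\<omega>. S \<omega> \<in> {1..M}) \<and> (\<forall>\<omega>. length (Y \<omega>) = n) \<and>
          memoryless P p n (\<lambda>\<omega>. x (S \<omega>)) Y" for S Y
      using that memoryless_INF_decoding_error_le[where p=p and l=l and S=S and Y=Y,
          OF assms(2) _ _ _ _ _ code inj decoder W] e
      by (auto simp: lower_E_indicator[OF assms(2)])
    show ?case
      using n M rate \<psi> lengths error by (intro exI[of _ M] exI[of _ x] exI[of _ \<psi>]) blast
  qed
qed

end
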